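(* Let the boundary data satisfy $y_{\rm D}=\widetilde y_{\rm D}|_{\Gamma_{\rm D}}$ and $\phi_{\rm D}=\nabla\widetilde y_{\rm D}|_{\Gamma_{\rm D}}$ for some $\widetilde y_{\rm D}\in H^3(\omega)^3$, and let $(y_h)_{h>0}\subset H^1(\omega)^3$ be a sequence of discrete displacements (one for each triangulation $\mathcal{T}_h$). If the sequence $(\widetilde E_h[y_h])_{h>0}$ is uniformly bounded, then there exists a constant $C>0$, independent of $h$, such that $\|\nabla\nabla_h y_h\|_{L^2(\omega)}\le C$.
   Context: $\omega\subset\mathbb{R}^2$ is a bounded polygonal domain, $\Gamma_{\rm D}\subset\partial\omega$ a part of the boundary of positive length, $y_{\rm D}:\Gamma_{\rm D}\to\mathbb{R}^3$, $\phi_{\rm D}:\Gamma_{\rm D}\to\mathbb{R}^{3\times2}$, and $\alpha\in\mathbb{R}$. $(\mathcal{T}_h)_{h>0}$ is a family of regular triangulations of $\omega$ ($h$ = maximal element diameter) such that $\Gamma_{\rm D}$ is exactly a union of edges; $\mathcal{N}_h$ denotes the vertices and $\mathcal{E}_h$ the edges. For $T\in\mathcal{T}_h$ with barycenter $x_T$, $P_3^{\mathrm{red}}(T)=\{p\in P_3(T): p(x_T)=\frac16\sum_{z\in\mathcal{N}_h\cap T}(2p(z)-\nabla p(z)\cdot[z-x_T])\}$; $\mathcal{S}^{\mathrm{dkt}}(\mathcal{T}_h)=\{w_h\in C(\overline\omega): w_h|_T\in P_3^{\mathrm{red}}(T)\ \forall T,\ \nabla w_h\text{ continuous at each vertex}\}$;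 $\mathcal{S}^2(\mathcal{T}_h)$ = continuous piecewise quadratics. The discrete gradient $\nabla_h:\mathcal{S}^{\mathrm{dkt}}(\mathcal{T}_h)\to\mathcal{S}^2(\mathcal{T}_h)^2$ maps $y_h$ to the unique $\theta_h$ with $\theta_h(z)=\nabla y_h(z)$ at vertices $z$ and, at each edge midpoint $z_E$ of an edge $E$ with endpoints $z_E^1,z_E^2$, unit tangent $t_E$ and unit normal $n_E$: $\theta_h(z_E)\cdot t_E=\nabla y_h(z_E)\cdot t_E$, $\theta_h(z_E)\cdot n_E=\frac12[\nabla y_h(z_E^1)+\nabla y_h(z_E^2)]\cdot n_E$. It is applied componentwise to $y_h\in\mathcal{S}^{\mathrm{dkt}}(\mathcal{T}_h)^3$; $\nabla\nabla_h$ is taken elementwise, $\Delta_h=\operatorname{div}\nabla_h$ (elementwise), $\partial_iy_h$ denotes the $i$-th column of $\nabla y_h$. $\widehat{\mathcal{I}}^1_h$ is the elementwise nodal interpolation into (discontinuous) piecewise linear functions. The discrete admissible set is $\mathcal{A}_h=\{y_h\in\mathcal{S}^{\mathrm{dkt}}(\mathcal{T}_h)^3: y_h(z)=y_{\rm D}(z),\ \nabla y_h(z)=\phi_{\rm D}(z)\ \forall z\in\mathcal{N}_h\cap\Gamma_{\rm D},\ [\nabla y_h(z)]^\top\nabla y_h(z)=I_2\ \forall z\in\mathcal{N}_h\}$. The discrete energy (body force taken to be zero, as the paper assumes throughout this part) is $\widetilde E_h[y_h]=\frac12\int_\omega|\nabla\nabla_hy_h|^2dx-\alpha\int_\omega\widehat{\mathcal{I}}^1_h\{\Delta_hy_h\cdot[\partial_1y_h\times\partial_2y_h]\}dx$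 for $y_h\in\mathcal{A}_h$, and $\widetilde E_h[y_h]=\infty$ for $y_h\notin\mathcal{A}_h$. *)

theory Defs
  imports "HOL-Analysis.Analysis"
begin

definition polygonal_domain :: "(real^2) set \<Rightarrow> bool" where
  "polygonal_domain \<omega> \<longleftrightarrow> open \<omega> \<and> connected \<omega> \<and> bounded \<omega> \<and> \<omega> \<noteq> {} \<and>
     (\<exists>S. finite S \<and> frontier \<omega> = (\<Union>(a,b)\<in>S. closed_segment a b))"

definition positive_length :: "(real^2) set \<Rightarrow> bool" where
  "positive_length \<Gamma> \<longleftrightarrow> (\<exists>a b. a \<noteq> b \<and> closed_segment a b \<subseteq> \<Gamma>)"

definition triangle :: "(real^2) set \<Rightarrow> bool" where
  "triangle T \<longleftrightarrow> (\<exists>V. card V = 3 \<and> \<not> collinear V \<and> T = convex hull V)"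

definition verts :: "(real^2) set \<Rightarrow> (real^2) set" where
  "verts T = (THE V. card V = 3 \<and> \<not> collinear V \<and> T = convex hull V)"

definition edges :: "(real^2) set \<Rightarrow> (real^2) set set" where
  "edges T = {closed_segment a b | a b. a \<in> verts T \<and> b \<in> verts T \<and> a \<noteq> b}"

definition bary :: "(real^2) set \<Rightarrow> real^2" where
  "bary T = (1/3) *\<^sub>R (\<Sum>z\<in>verts T. z)"

definition regular_triangulation :: "(real^2) set \<Rightarrow> (real^2) set set \<Rightarrow> bool" where
  "regular_triangulation \<omega> Tr \<longleftrightarrow> finite Tr \<and> (\<forall>T\<in>Tr. triangle T) \<and> \<Union>Tr = closure \<omega> \<and>
     (\<forall>T\<in>Tr. \<forall>T'\<in>Tr. T \<noteq> T' \<longrightarrow>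
        T \<inter> T' = {} \<or>
        (\<exists>z. z \<in> verts T \<and> z \<in> verts T' \<and> T \<inter> T' = {z}) \<or>
        (\<exists>E. E \<in> edges T \<and> E \<in> edges T' \<and> T \<inter> T' = E))"

definition nodes :: "(real^2) set set \<Rightarrow> (real^2) set" where
  "nodes Tr = \<Union>(verts ` Tr)"

definition edges_of :: "(real^2) set set \<Rightarrow> (real^2) set set" where
  "edges_of Tr = \<Union>(edges ` Tr)"

definition mesh :: "(real^2) set set \<Rightarrow> real" where
  "mesh Tr = Max (diameter ` Tr)"

definition poly2 :: "nat \<Rightarrow> (real^2 \<Rightarrow> real) \<Rightarrow> bool" where
  "poly2 k p \<longleftrightarrow> (\<exists>c :: nat \<Rightarrow> nat \<Rightarrow> real.
      \<forall>x. p x = (\<Sum>i\<le>k. \<Sum>j\<le>k - i. c i j * (x$1)^i * (x$2)^j))"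

definition grad :: "(real^2 \<Rightarrow> real) \<Rightarrow> real^2 \<Rightarrow> real^2" where
  "grad f x = (\<chi> i. frechet_derivative f (at x) (axis i 1))"

definition lpoly :: "nat \<Rightarrow> (real^2) set \<Rightarrow> (real^2 \<Rightarrow> real) \<Rightarrow> (real^2 \<Rightarrow> real)" where
  "lpoly k T f = (THE p. poly2 k p \<and> (\<forall>x\<in>T. p x = f x))"

text \<open>Elementwise gradient of a vector field y on T (rows: components, columns: partial
  derivatives), computed from the cubic polynomial representing y on T.\<close>
definition ljac :: "(real^2) set \<Rightarrow> (real^2 \<Rightarrow> real^3) \<Rightarrow> real^2 \<Rightarrow> real^2^3" where
  "ljac T y x = (\<chi> k. grad (lpoly 3 T (\<lambda>x. y x $ k)) x)"

definition P3red :: "(real^2) set \<Rightarrow> (real^2 \<Rightarrow> real) \<Rightarrow> bool" where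
  "P3red T p \<longleftrightarrow> poly2 3 p \<and>
     p (bary T) = (1/6) * (\<Sum>z\<in>verts T. 2 * p z - grad p z \<bullet> (z - bary T))"

definition S_dkt :: "(real^2) set set \<Rightarrow> (real^2 \<Rightarrow> real) \<Rightarrow> bool" where
  "S_dkt Tr w \<longleftrightarrow> continuous_on (\<Union>Tr) w \<and>
     (\<forall>T\<in>Tr. \<exists>p. P3red T p \<and> (\<forall>x\<in>T. w x = p x)) \<and>
     (\<forall>z\<in>nodes Tr. \<forall>T\<in>Tr. \<forall>T'\<in>Tr. z \<in> T \<longrightarrow> z \<in> T' \<longrightarrow>
        grad (lpoly 3 T w) z = grad (lpoly 3 T' w) z)"

text \<open>Gradient of a DKT field at a vertex (well defined by the vertex continuity).\<close>
definition vjac :: "(real^2) set set \<Rightarrow> (real^2 \<Rightarrow> real^3) \<Rightarrow> real^2 \<Rightarrow> real^2^3" where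
  "vjac Tr y z = ljac (SOME T. T \<in> Tr \<and> z \<in> T) y z"

definition rot90 :: "real^2 \<Rightarrow> real^2" where
  "rot90 t = (\<chi> i. if i = 1 then - (t$2) else t$1)"

definition ldgrad :: "(real^2) set \<Rightarrow> (real^2 \<Rightarrow> real) \<Rightarrow> (real^2 \<Rightarrow> real^2)" where
  "ldgrad T w = (THE q. (\<forall>i. poly2 2 (\<lambda>x. q x $ i)) \<and>
      (\<forall>z\<in>verts T. q z = grad (lpoly 3 T w) z) \<and>
      (\<forall>a\<in>verts T. \<forall>b\<in>verts T. a \<noteq> b \<longrightarrow>
         (let m = (1/2) *\<^sub>R (a + b); t = (1 / norm (b - a)) *\<^sub>R (b - a); n = rot90 t in
            q m \<bullet> t = grad (lpoly 3 T w) m \<bullet> t \<and>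
            q m \<bullet> n = (1/2) * ((grad (lpoly 3 T w) a + grad (lpoly 3 T w) b) \<bullet> n))))"

text \<open>Elementwise derivative of the discrete gradient of component k:
  dgrad_deriv T y k x $ i $ j = partial_j (nabla_h y_k)_i.\<close>
definition dgrad_deriv :: "(real^2) set \<Rightarrow> (real^2 \<Rightarrow> real^3) \<Rightarrow> 3 \<Rightarrow> real^2 \<Rightarrow> real^2^2" where
  "dgrad_deriv T y k x = (\<chi> i. grad (\<lambda>x. ldgrad T (\<lambda>x. y x $ k) x $ i) x)"

definition hess_sq :: "(real^2) set \<Rightarrow> (real^2 \<Rightarrow> real^3) \<Rightarrow> real^2 \<Rightarrow> real" where
  "hess_sq T y x = (\<Sum>k\<in>UNIV. \<Sum>i\<in>UNIV. \<Sum>j\<in>UNIV. (dgrad_deriv T y k x $ i $ j)^2)"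

definition dlap :: "(real^2) set \<Rightarrow> (real^2 \<Rightarrow> real^3) \<Rightarrow> real^2 \<Rightarrow> real^3" where
  "dlap T y x = (\<chi> k. \<Sum>i\<in>UNIV. dgrad_deriv T y k x $ i $ i)"

definition dhess_norm :: "(real^2) set set \<Rightarrow> (real^2 \<Rightarrow> real^3) \<Rightarrow> real" where
  "dhess_norm Tr y = sqrt (\<Sum>T\<in>Tr. integral T (hess_sq T y))"

definition linterp1 :: "(real^2) set \<Rightarrow> (real^2 \<Rightarrow> real) \<Rightarrow> (real^2 \<Rightarrow> real)" where
  "linterp1 T f = (THE l. poly2 1 l \<and> (\<forall>z\<in>verts T. l z = f z))"

definition adm :: "(real^2) set set \<Rightarrow> (real^2) set \<Rightarrow> (real^2 \<Rightarrow> real^3) \<Rightarrow>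
    (real^2 \<Rightarrow> real^2^3) \<Rightarrow> (real^2 \<Rightarrow> real^3) set" where
  "adm Tr \<Gamma>D yD \<phi>D = {y. (\<forall>k. S_dkt Tr (\<lambda>x. y x $ k)) \<and>
      (\<forall>z\<in>nodes Tr \<inter> \<Gamma>D. y z = yD z \<and> vjac Tr y z = \<phi>D z) \<and>
      (\<forall>z\<in>nodes Tr. transpose (vjac Tr y z) ** vjac Tr y z = mat 1)}"

definition energy :: "(real^2) set set \<Rightarrow> (real^2) set \<Rightarrow> (real^2 \<Rightarrow> real^3) \<Rightarrow>
    (real^2 \<Rightarrow> real^2^3) \<Rightarrow> real \<Rightarrow> (real^2 \<Rightarrow> real^3) \<Rightarrow> ereal" where
  "energy Tr \<Gamma>D yD \<phi>D \<alpha> y =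
     (if y \<in> adm Tr \<Gamma>D yD \<phi>D then
        ereal ((1/2) * (\<Sum>T\<in>Tr. integral T (hess_sq T y))
          - \<alpha> * (\<Sum>T\<in>Tr. integral T (linterp1 T
               (\<lambda>x. dlap T y x \<bullet> cross3 (column 1 (ljac T y x)) (column 2 (ljac T y x))))))
      else \<infinity>)"

definition pd :: "2 \<Rightarrow> (real^2 \<Rightarrow> real) \<Rightarrow> (real^2 \<Rightarrow> real)" where
  "pd i f = (\<lambda>x. frechet_derivative f (at x) (axis i 1))"

fun pds :: "2 list \<Rightarrow> (real^2 \<Rightarrow> real) \<Rightarrow> (real^2 \<Rightarrow> real)" where
  "pds [] f = f"
| "pds (i # is) f = pd i (pds is f)"

definition test_fun :: "(real^2) set \<Rightarrow> (real^2 \<Rightarrow> real) \<Rightarrow> bool" where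
  "test_fun \<omega> \<phi> \<longleftrightarrow> (\<forall>ds x. pds ds \<phi> differentiable (at x)) \<and>
     (\<exists>K. compact K \<and> K \<subseteq> \<omega> \<and> (\<forall>x. x \<notin> K \<longrightarrow> \<phi> x = 0))"

definition L2 :: "(real^2) set \<Rightarrow> (real^2 \<Rightarrow> real) \<Rightarrow> bool" where
  "L2 \<omega> g \<longleftrightarrow> set_borel_measurable lborel \<omega> g \<and> set_integrable lborel \<omega> (\<lambda>x. (g x)^2)"

definition weak_deriv :: "(real^2) set \<Rightarrow> 2 list \<Rightarrow> (real^2 \<Rightarrow> real) \<Rightarrow> (real^2 \<Rightarrow> real) \<Rightarrow> bool" where
  "weak_deriv \<omega> ds f g \<longleftrightarrow> (\<forall>\<phi>. test_fun \<omega> \<phi> \<longrightarrow>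
      set_integrable lborel \<omega> (\<lambda>x. f x * pds ds \<phi> x) \<and>
      set_integrable lborel \<omega> (\<lambda>x. g x * \<phi> x) \<and>
      (LINT x:\<omega>|lborel. f x * pds ds \<phi> x) = (-1)^(length ds) * (LINT x:\<omega>|lborel. g x * \<phi> x))"

definition H3 :: "(real^2) set \<Rightarrow> (real^2 \<Rightarrow> real^3) \<Rightarrow> bool" where
  "H3 \<omega> f \<longleftrightarrow> L2 \<omega> (\<lambda>x. f x $ 1) \<and> L2 \<omega> (\<lambda>x. f x $ 2) \<and> L2 \<omega> (\<lambda>x. f x $ 3) \<and>
     (\<forall>k ds. length ds \<le> 3 \<longrightarrow> (\<exists>g. L2 \<omega> g \<and> weak_deriv \<omega> ds (\<lambda>x. f x $ k) g))"

end

theory Submission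
  imports Defs
begin

text \<open>
  On each triangle the discrete gradient is a quadratic vector field, so \<open>\<nabla>\<nabla>\<^sub>h y\<^sub>h\<close> is
  affine there. At the vertices the columns of \<open>\<nabla>y\<^sub>h\<close> are orthonormal, hence
  \<open>|\<partial>\<^sub>1y\<^sub>h \<times> \<partial>\<^sub>2y\<^sub>h| = 1\<close>, and the nodal interpolant of \<open>\<Delta>\<^sub>hy\<^sub>h \<cdot> (\<partial>\<^sub>1y\<^sub>h \<times> \<partial>\<^sub>2y\<^sub>h)\<close> is bounded on
  the triangle T by \<open>\<surd>2 M\<close>, where M is the largest value of \<open>|\<nabla>\<nabla>\<^sub>h y\<^sub>h|\<close> at the vertices.
  Conversely, on the copy of T shrunk by the factor 1/4 towards a vertex where M is
  attained, the affine field \<open>\<nabla>\<nabla>\<^sub>h y\<^sub>h\<close> keeps norm at least M/2, so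
  \<open>M\<^sup>2 |T| \<le> 64 \<integral>\<^sub>T |\<nabla>\<nabla>\<^sub>h y\<^sub>h|\<^sup>2\<close>. Summing over the triangles with Cauchy-Schwarz bounds the
  curvature term of the energy by a multiple of \<open>\<parallel>\<nabla>\<nabla>\<^sub>h y\<^sub>h\<parallel>\<close>, and a bounded energy then
  bounds \<open>\<parallel>\<nabla>\<nabla>\<^sub>h y\<^sub>h\<parallel>\<close> through a quadratic inequality.
\<close>

section \<open>Polynomials of low degree in the plane\<close>

lemma poly2_add:
  assumes "poly2 k f" "poly2 k g"
  shows "poly2 k (\<lambda>x. f x + g x)"
proof -
  obtain c d where c: "\<forall>x. f x = (\<Sum>i\<le>k. \<Sum>j\<le>k - i. c i j * (x$1)^i * (x$2)^j)"
    and d: "\<forall>x. g x = (\<Sum>i\<le>k. \<Sum>j\<le>k - i. d i j * (x$1)^i * (x$2)^j)"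
    using assms unfolding poly2_def by blast
  show ?thesis unfolding poly2_def
    by (rule exI[of _ "\<lambda>i j. c i j + d i j"]) (simp add: c d sum.distrib distrib_right)
qed

lemma poly2_cmult:
  assumes "poly2 k f"
  shows "poly2 k (\<lambda>x. a * f x)"
proof -
  obtain c where c: "\<forall>x. f x = (\<Sum>i\<le>k. \<Sum>j\<le>k - i. c i j * (x$1)^i * (x$2)^j)"
    using assms unfolding poly2_def by blast
  show ?thesis unfolding poly2_def
    by (rule exI[of _ "\<lambda>i j. a * c i j"]) (simp add: c sum_distrib_left mult.assoc)
qed

lemma poly2_diff:
  assumes "poly2 k f" "poly2 k g"
  shows "poly2 k (\<lambda>x. f x - g x)"
  using poly2_add[OF assms(1) poly2_cmult[OF assms(2), of "-1"]] by simp

lemma poly2_const: "poly2 k (\<lambda>x. a)"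
proof -
  have const_sum: "(\<Sum>i\<le>k. \<Sum>j\<le>k - i. (if i = 0 \<and> j = 0 then a else 0) * (x$1)^i * (x$2)^j) = a"
    for x :: "real^2"
  proof -
    have "(\<Sum>i\<le>k. \<Sum>j\<le>k - i. (if i = 0 \<and> j = 0 then a else 0) * (x$1)^i * (x$2)^j)
        = (\<Sum>i\<le>k. if i = 0 then a else 0)"
      by (rule sum.cong) (simp_all add: if_distrib[of "\<lambda>c. c * _"] sum.delta cong: if_cong)
    then show ?thesis by simp
  qed
  show ?thesis unfolding poly2_def
    by (rule exI[of _ "\<lambda>i j. if i = 0 \<and> j = 0 then a else 0"]) (simp add: const_sum)
qed

lemma poly2_continuous_on:
  assumes "poly2 k p"
  shows "continuous_on S p"
proof -
  obtain c where "\<forall>x. p x = (\<Sum>i\<le>k. \<Sum>j\<le>k - i. c i j * (x$1)^i * (x$2)^j)"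
    using assms unfolding poly2_def by blast
  then have "p = (\<lambda>x. \<Sum>i\<le>k. \<Sum>j\<le>k - i. c i j * (x$1)^i * (x$2)^j)" by blast
  then show ?thesis by (simp add: continuous_intros)
qed

lemma poly2_1_iff: "poly2 1 p \<longleftrightarrow> (\<exists>c0 c1 c2. \<forall>x. p x = c0 + c1 * x$1 + c2 * x$2)"
proof
  assume "poly2 1 p"
  then obtain c where c: "\<forall>x. p x = (\<Sum>i\<le>1. \<Sum>j\<le>1 - i. c i j * (x$1)^i * (x$2)^j)"
    unfolding poly2_def by blast
  show "\<exists>c0 c1 c2. \<forall>x. p x = c0 + c1 * x$1 + c2 * x$2"
    by (rule exI[of _ "c 0 0"], rule exI[of _ "c 1 0"], rule exI[of _ "c 0 1"]) (simp add: c)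
next
  assume "\<exists>c0 c1 c2. \<forall>x. p x = c0 + c1 * x$1 + c2 * x$2"
  then obtain c0 c1 c2 where c: "\<forall>x. p x = c0 + c1 * x$1 + c2 * x$2" by blast
  show "poly2 1 p" unfolding poly2_def
    by (rule exI[of _ "\<lambda>i j. if i = 0 \<and> j = 0 then c0 else if i = 1 \<and> j = 0 then c1
                            else if i = 0 \<and> j = 1 then c2 else 0"]) (simp add: c)
qed

lemma poly2_2_iff:
  "poly2 2 p \<longleftrightarrow> (\<exists>c00 c10 c01 c20 c11 c02. \<forall>x.
     p x = c00 + c10 * x$1 + c01 * x$2 + c20 * (x$1)^2 + c11 * (x$1 * x$2) + c02 * (x$2)^2)"
proof
  assume "poly2 2 p"
  then obtain c where c: "\<forall>x. p x = (\<Sum>i\<le>2. \<Sum>j\<le>2 - i. c i j * (x$1)^i * (x$2)^j)"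
    unfolding poly2_def by blast
  show "\<exists>c00 c10 c01 c20 c11 c02. \<forall>x.
     p x = c00 + c10 * x$1 + c01 * x$2 + c20 * (x$1)^2 + c11 * (x$1 * x$2) + c02 * (x$2)^2"
    by (rule exI[of _ "c 0 0"], rule exI[of _ "c 1 0"], rule exI[of _ "c 0 1"], rule exI[of _ "c 2 0"], rule exI[of _ "c 1 1"], rule exI[of _ "c 0 2"])
       (simp add: c numeral_2_eq_2 algebra_simps)
next
  assume "\<exists>c00 c10 c01 c20 c11 c02. \<forall>x.
     p x = c00 + c10 * x$1 + c01 * x$2 + c20 * (x$1)^2 + c11 * (x$1 * x$2) + c02 * (x$2)^2"
  then obtain c00 c10 c01 c20 c11 c02 where c: "\<forall>x.
     p x = c00 + c10 * x$1 + c01 * x$2 + c20 * (x$1)^2 + c11 * (x$1 * x$2) + c02 * (x$2)^2"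
    by blast
  show "poly2 2 p" unfolding poly2_def
    by (rule exI[of _ "\<lambda>i j. if i = 0 \<and> j = 0 then c00 else if i = 1 \<and> j = 0 then c10
        else if i = 0 \<and> j = 1 then c01 else if i = 2 \<and> j = 0 then c20
        else if i = 1 \<and> j = 1 then c11 else if i = 0 \<and> j = 2 then c02 else 0"])
       (simp add: c numeral_2_eq_2 algebra_simps)
qed

lemma poly2_1_imp_poly2_2: "poly2 1 p \<Longrightarrow> poly2 2 p"
  unfolding poly2_1_iff poly2_2_iff by (metis add.right_neutral mult_zero_left)

lemma poly2_1_mult:
  assumes "poly2 1 f" "poly2 1 g"
  shows "poly2 2 (\<lambda>x. f x * g x)"
proof -
  obtain a0 a1 a2 b0 b1 b2 where f: "\<forall>x. f x = a0 + a1 * x$1 + a2 * x$2"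
    and g: "\<forall>x. g x = b0 + b1 * x$1 + b2 * x$2"
    using assms unfolding poly2_1_iff by blast
  show ?thesis unfolding poly2_2_iff
    by (rule exI[of _ "a0*b0"], rule exI[of _ "a0*b1+a1*b0"], rule exI[of _ "a0*b2+a2*b0"], rule exI[of _ "a1*b1"], rule exI[of _ "a1*b2+a2*b1"], rule exI[of _ "a2*b2"])
       (simp add: f g algebra_simps power2_eq_square)
qed

lemma poly2_2_grad:
  assumes "poly2 2 p"
  shows "poly2 1 (\<lambda>x. grad p x $ j)"
proof -
  obtain c00 c10 c01 c20 c11 c02 where c: "\<forall>x.
     p x = c00 + c10 * x$1 + c01 * x$2 + c20 * (x$1)^2 + c11 * (x$1 * x$2) + c02 * (x$2)^2"
    using assms unfolding poly2_2_iff by blast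
  have p: "p = (\<lambda>x. c00 + c10 * x$1 + c01 * x$2 + c20 * (x$1 * x$1) + c11 * (x$1 * x$2) + c02 * (x$2 * x$2))"
    by (rule ext) (simp add: c power2_eq_square)
  have coord: "((\<lambda>x. x $ i) has_derivative (\<lambda>x. x $ i)) F" for i :: 2 and F
    by (rule bounded_linear.has_derivative[OF bounded_linear_vec_nth has_derivative_ident])
  have d: "(p has_derivative (\<lambda>h. 0 + c10 * h$1 + c01 * h$2 + c20 * (x$1 * h$1 + h$1 * x$1)
      + c11 * (x$1 * h$2 + h$1 * x$2) + c02 * (x$2 * h$2 + h$2 * x$2))) (at x)" for x
    unfolding p by (intro has_derivative_add has_derivative_mult has_derivative_const coord has_derivative_mult_right)
  define e where "e = (axis j 1 :: real^2)"
  have "grad p x $ j = (c10 * e$1 + c01 * e$2) + (2 * c20 * e$1 + c11 * e$2) * x$1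
      + (c11 * e$1 + 2 * c02 * e$2) * x$2" for x
    unfolding grad_def frechet_derivative_at[OF d[of x], symmetric] by (simp add: e_def algebra_simps)
  then show ?thesis unfolding poly2_1_iff by blast
qed

definition affine_map :: "('a::real_vector \<Rightarrow> 'b::real_vector) \<Rightarrow> bool" where
  "affine_map f \<longleftrightarrow> (\<forall>p q t. f ((1 - t) *\<^sub>R p + t *\<^sub>R q) = (1 - t) *\<^sub>R f p + t *\<^sub>R f q)"

lemma poly2_1_affine_map: "poly2 1 f \<Longrightarrow> affine_map f"
  unfolding poly2_1_iff affine_map_def by (auto simp: algebra_simps)

lemma convex_on_norm_affine_map:
  assumes "affine_map f" "convex S"
  shows "convex_on S (\<lambda>x. norm (f x))"
proof (rule convex_onI[OF _ assms(2)])
  fix t :: real and x y assume "0 < t" "t < 1"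
  then show "norm (f ((1 - t) *\<^sub>R x + t *\<^sub>R y)) \<le> (1 - t) * norm (f x) + t * norm (f y)"
    using assms(1) norm_triangle_ineq[of "(1 - t) *\<^sub>R f x" "t *\<^sub>R f y"]
    unfolding affine_map_def by simp
qed

lemma affine_map_norm_le_vertex_max:
  assumes "affine_map f" "x \<in> convex hull {a, b, c}"
  shows "norm (f x) \<le> max (norm (f a)) (max (norm (f b)) (norm (f c)))"
proof -
  have "\<forall>x\<in>convex hull {a, b, c}. norm (f x) \<le> max (norm (f a)) (max (norm (f b)) (norm (f c)))"
    by (rule convex_on_convex_hull_bound[OF convex_on_norm_affine_map[OF assms(1) convex_convex_hull]]) auto
  then show ?thesis using assms(2) by blast
qed

section \<open>Interpolation on a triangle\<close>

lemma noncollinear_det_nonzero: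
  fixes a b c :: "real^2"
  assumes "\<not> collinear {a, b, c}"
  shows "(b - a)$1 * (c - a)$2 - (b - a)$2 * (c - a)$1 \<noteq> 0"
proof
  define u v where "u = b - a" and "v = c - a"
  assume "(b - a)$1 * (c - a)$2 - (b - a)$2 * (c - a)$1 = 0"
  then have D: "u$1 * v$2 = u$2 * v$1" unfolding u_def v_def by simp
  have "collinear {0, u, v}"
  proof (cases "u = 0")
    case False
    then obtain i where i: "u$i \<noteq> 0" by (metis vec_eq_iff zero_index)
    have "v = (v$i / u$i) *\<^sub>R u"
      using i D exhaust_2[of i] by (auto simp: vec_eq_iff forall_2 field_simps)
    then show ?thesis unfolding collinear_lemma by blast
  qed (simp add: collinear_lemma)
  then have "collinear {b, a, c}" by (simp add: collinear_3 u_def v_def)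
  then show False using assms by (simp add: insert_commute)
qed

lemma triangle_affine_coordinates:
  fixes a b c :: "real^2"
  assumes "\<not> collinear {a, b, c}"
  obtains s t where "poly2 1 s" "poly2 1 t"
    "\<And>x. x = a + s x *\<^sub>R (b - a) + t x *\<^sub>R (c - a)"
    "\<And>\<sigma> \<tau>. s (a + \<sigma> *\<^sub>R (b - a) + \<tau> *\<^sub>R (c - a)) = \<sigma>"
    "\<And>\<sigma> \<tau>. t (a + \<sigma> *\<^sub>R (b - a) + \<tau> *\<^sub>R (c - a)) = \<tau>"
proof -
  define u v where "u = b - a" and "v = c - a"
  define D where "D = u$1 * v$2 - u$2 * v$1"
  have "D \<noteq> 0" unfolding D_def u_def v_def by (rule noncollinear_det_nonzero[OF assms])
  define s where "s x = ((x - a)$1 * v$2 - (x - a)$2 * v$1) / D" for x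
  define t where "t x = (u$1 * (x - a)$2 - u$2 * (x - a)$1) / D" for x
  show thesis
  proof (rule that)
    show "poly2 1 s" unfolding poly2_1_iff s_def
      by (rule exI[of _ "(a$2 * v$1 - a$1 * v$2) / D"], rule exI[of _ "v$2 / D"], rule exI[of _ "- v$1 / D"])
         (simp add: diff_divide_distrib add_divide_distrib algebra_simps)
    show "poly2 1 t" unfolding poly2_1_iff t_def
      by (rule exI[of _ "(u$2 * a$1 - u$1 * a$2) / D"], rule exI[of _ "- u$2 / D"], rule exI[of _ "u$1 / D"])
         (simp add: diff_divide_distrib add_divide_distrib algebra_simps)
    show "x = a + s x *\<^sub>R (b - a) + t x *\<^sub>R (c - a)" for x
    proof -
      define \<sigma> \<tau> where "\<sigma> = ((x - a)$1 * v$2 - (x - a)$2 * v$1) / D"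
        and "\<tau> = (u$1 * (x - a)$2 - u$2 * (x - a)$1) / D"
      have "D * (x$1 - a$1) = D * \<sigma> * u$1 + D * \<tau> * v$1"
        "D * (x$2 - a$2) = D * \<sigma> * u$2 + D * \<tau> * v$2"
      proof -
        have D\<sigma>: "D * \<sigma> = (x - a)$1 * v$2 - (x - a)$2 * v$1"
          and D\<tau>: "D * \<tau> = u$1 * (x - a)$2 - u$2 * (x - a)$1"
          using \<open>D \<noteq> 0\<close> unfolding \<sigma>_def \<tau>_def by simp_all
        then show "D * (x$1 - a$1) = D * \<sigma> * u$1 + D * \<tau> * v$1"
          "D * (x$2 - a$2) = D * \<sigma> * u$2 + D * \<tau> * v$2"
          by (simp_all only: D\<sigma> D\<tau>) (simp_all add: D_def algebra_simps)
      qed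
      then have "x$1 - a$1 = \<sigma> * u$1 + \<tau> * v$1" "x$2 - a$2 = \<sigma> * u$2 + \<tau> * v$2"
        using \<open>D \<noteq> 0\<close> by (simp_all add: mult.assoc flip: distrib_left)
      then have "x$1 = a$1 + \<sigma> * u$1 + \<tau> * v$1" "x$2 = a$2 + \<sigma> * u$2 + \<tau> * v$2"
        by linarith+
      then show ?thesis
        unfolding s_def t_def u_def[symmetric] v_def[symmetric] \<sigma>_def[symmetric] \<tau>_def[symmetric]
        by (simp add: vec_eq_iff forall_2)
    qed
    show "s (a + \<sigma> *\<^sub>R (b - a) + \<tau> *\<^sub>R (c - a)) = \<sigma>" for \<sigma> \<tau>
      using \<open>D \<noteq> 0\<close> unfolding s_def D_def u_def[symmetric] v_def[symmetric]
      by (simp add: field_simps)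
    show "t (a + \<sigma> *\<^sub>R (b - a) + \<tau> *\<^sub>R (c - a)) = \<tau>" for \<sigma> \<tau>
      using \<open>D \<noteq> 0\<close> unfolding t_def D_def u_def[symmetric] v_def[symmetric]
      by (simp add: field_simps)
  qed
qed

lemma P2_node_coordinates:
  fixes a b c :: "'a::real_vector"
  shows "a + 0 *\<^sub>R (b - a) + 0 *\<^sub>R (c - a) = a"
    "a + 1 *\<^sub>R (b - a) + 0 *\<^sub>R (c - a) = b"
    "a + 0 *\<^sub>R (b - a) + 1 *\<^sub>R (c - a) = c"
    "a + (1/2) *\<^sub>R (b - a) + 0 *\<^sub>R (c - a) = (1/2) *\<^sub>R (a + b)"
    "a + 0 *\<^sub>R (b - a) + (1/2) *\<^sub>R (c - a) = (1/2) *\<^sub>R (a + c)"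
    "a + (1/2) *\<^sub>R (b - a) + (1/2) *\<^sub>R (c - a) = (1/2) *\<^sub>R (b + c)"
  by (simp_all add: algebra_simps flip: scaleR_2)

lemma poly2_2_affine_pullback:
  assumes "poly2 2 p"
  obtains E0 E1 E2 E3 E4 E5 where "\<And>\<sigma> \<tau>. p (a + \<sigma> *\<^sub>R u + \<tau> *\<^sub>R v)
    = E0 + E1 * \<sigma> + E2 * \<tau> + E3 * \<sigma>^2 + E4 * (\<sigma> * \<tau>) + E5 * \<tau>^2"
proof -
  obtain c00 c10 c01 c20 c11 c02 where c: "\<forall>x.
     p x = c00 + c10 * x$1 + c01 * x$2 + c20 * (x$1)^2 + c11 * (x$1 * x$2) + c02 * (x$2)^2"
    using assms unfolding poly2_2_iff by blast
  show thesis
    by (rule that[of "c00 + c10 * a$1 + c01 * a$2 + c20 * (a$1)^2 + c11 * (a$1 * a$2) + c02 * (a$2)^2"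
          "c10 * u$1 + c01 * u$2 + 2 * c20 * a$1 * u$1 + c11 * (a$1 * u$2 + u$1 * a$2) + 2 * c02 * a$2 * u$2"
          "c10 * v$1 + c01 * v$2 + 2 * c20 * a$1 * v$1 + c11 * (a$1 * v$2 + v$1 * a$2) + 2 * c02 * a$2 * v$2"
          "c20 * (u$1)^2 + c11 * (u$1 * u$2) + c02 * (u$2)^2"
          "2 * c20 * u$1 * v$1 + c11 * (u$1 * v$2 + u$2 * v$1) + 2 * c02 * u$2 * v$2"
          "c20 * (v$1)^2 + c11 * (v$1 * v$2) + c02 * (v$2)^2"])
       (simp add: c power2_eq_square algebra_simps)
qed

lemma poly2_2_eq_0_if_vanishes_on_P2_nodes:
  assumes nc: "\<not> collinear {a, b, c}" and p: "poly2 2 p"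
    and "p a = 0" "p b = 0" "p c = 0"
      "p ((1/2) *\<^sub>R (a + b)) = 0" "p ((1/2) *\<^sub>R (a + c)) = 0" "p ((1/2) *\<^sub>R (b + c)) = 0"
  shows "p x = 0"
proof -
  obtain s t where st: "\<And>x. x = a + s x *\<^sub>R (b - a) + t x *\<^sub>R (c - a)"
    using triangle_affine_coordinates[OF nc] by metis
  obtain E0 E1 E2 E3 E4 E5 where E: "\<And>\<sigma> \<tau>. p (a + \<sigma> *\<^sub>R (b - a) + \<tau> *\<^sub>R (c - a))
    = E0 + E1 * \<sigma> + E2 * \<tau> + E3 * \<sigma>^2 + E4 * (\<sigma> * \<tau>) + E5 * \<tau>^2"
    using poly2_2_affine_pullback[OF p] by blast
  have "E0 = 0" "E0 + E1 + E3 = 0" "E0 + E2 + E5 = 0"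
    "E0 + E1/2 + E3/4 = 0" "E0 + E2/2 + E5/4 = 0" "E0 + E1/2 + E2/2 + E3/4 + E4/4 + E5/4 = 0"
    using E[of 0 0] E[of 1 0] E[of 0 1] E[of "1/2" 0] E[of 0 "1/2"] E[of "1/2" "1/2"]
    unfolding P2_node_coordinates assms(3-) by (simp_all add: power2_eq_square)
  then have "E0 = 0" "E1 = 0" "E2 = 0" "E3 = 0" "E4 = 0" "E5 = 0" by linarith+
  then show ?thesis using E[of "s x" "t x"] st[of x] by simp
qed

lemma poly2_2_interpolant_exists:
  assumes nc: "\<not> collinear {a, b, c}"
  shows "\<exists>p. poly2 2 p \<and> p a = fa \<and> p b = fb \<and> p c = fc \<and>
    p ((1/2) *\<^sub>R (a + b)) = fab \<and> p ((1/2) *\<^sub>R (a + c)) = fac \<and> p ((1/2) *\<^sub>R (b + c)) = fbc"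
proof -
  obtain s t where st: "poly2 1 s" "poly2 1 t"
    "\<And>\<sigma> \<tau>. s (a + \<sigma> *\<^sub>R (b - a) + \<tau> *\<^sub>R (c - a)) = \<sigma>"
    "\<And>\<sigma> \<tau>. t (a + \<sigma> *\<^sub>R (b - a) + \<tau> *\<^sub>R (c - a)) = \<tau>"
    using triangle_affine_coordinates[OF nc] by metis
  define r where "r x = 1 - s x - t x" for x
  have r: "poly2 1 r" unfolding r_def by (intro poly2_diff poly2_const st)
  \<comment> \<open>The Lagrange basis of P2 written in the barycentric coordinates r, s, t.\<close>
  define p where "p x = fa * (r x * (2 * r x - 1)) + fb * (s x * (2 * s x - 1))
    + fc * (t x * (2 * t x - 1)) + 4 * fab * (r x * s x) + 4 * fac * (r x * t x)
    + 4 * fbc * (s x * t x)" for x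
  have "poly2 2 p" unfolding p_def
    by (intro poly2_add poly2_cmult poly2_1_mult poly2_diff poly2_const r st)
  moreover have "p (a + \<sigma> *\<^sub>R (b - a) + \<tau> *\<^sub>R (c - a)) =
    fa * ((1 - \<sigma> - \<tau>) * (2 * (1 - \<sigma> - \<tau>) - 1)) + fb * (\<sigma> * (2 * \<sigma> - 1))
    + fc * (\<tau> * (2 * \<tau> - 1)) + 4 * fab * ((1 - \<sigma> - \<tau>) * \<sigma>) + 4 * fac * ((1 - \<sigma> - \<tau>) * \<tau>)
    + 4 * fbc * (\<sigma> * \<tau>)" for \<sigma> \<tau>
    unfolding p_def r_def st(3,4) ..
  from this[of 0 0] this[of 1 0] this[of 0 1] this[of "1/2" 0] this[of 0 "1/2"] this[of "1/2" "1/2"]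
  have "p a = fa" "p b = fb" "p c = fc"
    "p ((1/2) *\<^sub>R (a + b)) = fab" "p ((1/2) *\<^sub>R (a + c)) = fac" "p ((1/2) *\<^sub>R (b + c)) = fbc"
    unfolding P2_node_coordinates by simp_all
  ultimately show ?thesis by blast
qed

lemma poly2_2_vector_interpolation:
  fixes fa fb fc fab fac fbc :: "real^'n"
  assumes nc: "\<not> collinear {a, b, c}"
  shows "\<exists>!q. (\<forall>i. poly2 2 (\<lambda>x. q x $ i)) \<and> q a = fa \<and> q b = fb \<and> q c = fc \<and>
    q ((1/2) *\<^sub>R (a + b)) = fab \<and> q ((1/2) *\<^sub>R (a + c)) = fac \<and> q ((1/2) *\<^sub>R (b + c)) = fbc"
proof (rule ex_ex1I)
  have "\<forall>i. \<exists>p. poly2 2 p \<and> p a = fa $ i \<and> p b = fb $ i \<and> p c = fc $ i \<and>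
    p ((1/2) *\<^sub>R (a + b)) = fab $ i \<and> p ((1/2) *\<^sub>R (a + c)) = fac $ i \<and> p ((1/2) *\<^sub>R (b + c)) = fbc $ i"
    using poly2_2_interpolant_exists[OF nc] by blast
  then obtain P where P: "\<And>i. poly2 2 (P i) \<and> P i a = fa $ i \<and> P i b = fb $ i \<and> P i c = fc $ i \<and>
    P i ((1/2) *\<^sub>R (a + b)) = fab $ i \<and> P i ((1/2) *\<^sub>R (a + c)) = fac $ i \<and>
    P i ((1/2) *\<^sub>R (b + c)) = fbc $ i"
    by metis
  show "\<exists>q. (\<forall>i. poly2 2 (\<lambda>x. q x $ i)) \<and> q a = fa \<and> q b = fb \<and> q c = fc \<and>
    q ((1/2) *\<^sub>R (a + b)) = fab \<and> q ((1/2) *\<^sub>R (a + c)) = fac \<and> q ((1/2) *\<^sub>R (b + c)) = fbc"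
    by (rule exI[of _ "\<lambda>x. \<chi> i. P i x"]) (simp add: P vec_eq_iff)
next
  fix q q' assume q: "(\<forall>i. poly2 2 (\<lambda>x. q x $ i)) \<and> q a = fa \<and> q b = fb \<and> q c = fc \<and>
      q ((1/2) *\<^sub>R (a + b)) = fab \<and> q ((1/2) *\<^sub>R (a + c)) = fac \<and> q ((1/2) *\<^sub>R (b + c)) = fbc"
    and q': "(\<forall>i. poly2 2 (\<lambda>x. q' x $ i)) \<and> q' a = fa \<and> q' b = fb \<and> q' c = fc \<and>
      q' ((1/2) *\<^sub>R (a + b)) = fab \<and> q' ((1/2) *\<^sub>R (a + c)) = fac \<and> q' ((1/2) *\<^sub>R (b + c)) = fbc"
  have "q x $ i - q' x $ i = 0" for x i
    by (rule poly2_2_eq_0_if_vanishes_on_P2_nodes[OF nc]) (use q q' in \<open>auto intro: poly2_diff\<close>)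
  then show "q = q'" by (simp add: fun_eq_iff vec_eq_iff)
qed

lemma poly2_1_interpolation:
  assumes nc: "\<not> collinear {a, b, c}"
  shows "\<exists>!l. poly2 1 l \<and> l a = fa \<and> l b = fb \<and> l c = fc"
proof (rule ex_ex1I)
  obtain s t where st: "poly2 1 s" "poly2 1 t"
    "\<And>\<sigma> \<tau>. s (a + \<sigma> *\<^sub>R (b - a) + \<tau> *\<^sub>R (c - a)) = \<sigma>"
    "\<And>\<sigma> \<tau>. t (a + \<sigma> *\<^sub>R (b - a) + \<tau> *\<^sub>R (c - a)) = \<tau>"
    using triangle_affine_coordinates[OF nc] by metis
  define l where "l x = fa + (fb - fa) * s x + (fc - fa) * t x" for x
  have "poly2 1 l" unfolding l_def by (intro poly2_add poly2_cmult poly2_const st)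
  moreover have "l (a + \<sigma> *\<^sub>R (b - a) + \<tau> *\<^sub>R (c - a)) = fa + (fb - fa) * \<sigma> + (fc - fa) * \<tau>"
    for \<sigma> \<tau> unfolding l_def st(3,4) ..
  from this[of 0 0] this[of 1 0] this[of 0 1] have "l a = fa" "l b = fb" "l c = fc"
    unfolding P2_node_coordinates by simp_all
  ultimately show "\<exists>l. poly2 1 l \<and> l a = fa \<and> l b = fb \<and> l c = fc" by blast
next
  fix l l' assume l: "poly2 1 l \<and> l a = fa \<and> l b = fb \<and> l c = fc"
    and l': "poly2 1 l' \<and> l' a = fa \<and> l' b = fb \<and> l' c = fc"
  define d where "d x = l x - l' x" for x
  have d: "poly2 1 d" unfolding d_def using l l' by (intro poly2_diff) auto
  have mid: "d ((1/2) *\<^sub>R (p + q)) = (1/2) * d p + (1/2) * d q" for p q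
  proof -
    have "d ((1 - 1/2) *\<^sub>R p + (1/2) *\<^sub>R q) = (1 - 1/2) *\<^sub>R d p + (1/2) *\<^sub>R d q"
      using poly2_1_affine_map[OF d] unfolding affine_map_def by blast
    then show ?thesis by (simp add: scaleR_add_right)
  qed
  have vert: "d a = 0" "d b = 0" "d c = 0" using l l' by (simp_all add: d_def)
  have "d x = 0" for x
    by (rule poly2_2_eq_0_if_vanishes_on_P2_nodes[OF nc poly2_1_imp_poly2_2[OF d]])
      (simp_all add: mid vert)
  then show "l = l'" by (simp add: d_def fun_eq_iff)
qed

lemma triangle_vertices:
  assumes "triangle T"
  obtains a b c where "verts T = {a, b, c}" "T = convex hull {a, b, c}" "\<not> collinear {a, b, c}"
proof -
  obtain V where V: "card V = 3" "\<not> collinear V" "T = convex hull V"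
    using assms unfolding triangle_def by blast
  \<comment> \<open>The vertex set is determined by T: it consists of the extreme points.\<close>
  have extreme: "W = {x. x extreme_point_of T}" if W: "card W = 3" "\<not> collinear W" "T = convex hull W" for W
  proof -
    obtain a b c where abc: "W = {a, b, c}" using W(1) unfolding card_3_iff by blast
    have "\<not> affine_dependent W"
      using W(2) unfolding abc collinear_3_eq_affine_dependent[of a b c] by simp
    then show ?thesis using extreme_point_of_convex_hull_affine_independent W(3) by auto
  qed
  have "verts T = V"
    unfolding verts_def
  proof (rule the_equality)
    show "card V = 3 \<and> \<not> collinear V \<and> T = convex hull V" using V by blast
    show "W = V" if "card W = 3 \<and> \<not> collinear W \<and> T = convex hull W" for W
      using extreme[of W] extreme[OF V] that by blast
  qed
  moreover obtain a b c where "V = {a, b, c}" using V(1) unfolding card_3_iff by blast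
  ultimately show thesis using that V by auto
qed

lemma linterp1_triangle:
  assumes "verts T = {a, b, c}" "\<not> collinear {a, b, c}"
  shows "poly2 1 (linterp1 T f) \<and> linterp1 T f a = f a \<and> linterp1 T f b = f b \<and> linterp1 T f c = f c"
proof -
  have "linterp1 T f = (THE l. poly2 1 l \<and> l a = f a \<and> l b = f b \<and> l c = f c)"
    unfolding linterp1_def assms(1) by simp
  then show ?thesis using theI'[OF poly2_1_interpolation[OF assms(2)]] by simp
qed

section \<open>The discrete Hessian on a triangle\<close>

lemma rot90_uminus: "rot90 (- t) = - rot90 t"
  by (simp add: rot90_def vec_eq_iff forall_2)

lemma rot90_inner: "rot90 t \<bullet> t = 0" "t \<bullet> rot90 t = 0" "rot90 t \<bullet> rot90 t = t \<bullet> t"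
  by (simp_all add: rot90_def inner_vec_def sum_2 algebra_simps)

lemma unit_rot90_expansion:
  fixes z t :: "real^2"
  assumes "norm t = 1"
  shows "z = (z \<bullet> t) *\<^sub>R t + (z \<bullet> rot90 t) *\<^sub>R rot90 t"
proof -
  have "t \<bullet> t = 1" using assms by (simp add: power2_norm_eq_inner[symmetric])
  then have tt: "t$1 * t$1 + t$2 * t$2 = 1" by (simp add: inner_vec_def sum_2)
  have "z$1 = (z$1 * t$1 + z$2 * t$2) * t$1 + (z$1 * (- t$2) + z$2 * t$1) * (- t$2)"
    "z$2 = (z$1 * t$1 + z$2 * t$2) * t$2 + (z$1 * (- t$2) + z$2 * t$1) * t$1"
    using tt by algebra+
  then show ?thesis by (simp add: vec_eq_iff forall_2 inner_vec_def sum_2 rot90_def)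
qed

definition edge_midpoint_dgrad :: "(real^2 \<Rightarrow> real^2) \<Rightarrow> real^2 \<Rightarrow> real^2 \<Rightarrow> real^2" where
  "edge_midpoint_dgrad g p q = (let m = (1/2) *\<^sub>R (p + q); t = (1 / norm (q - p)) *\<^sub>R (q - p); n = rot90 t in
     (g m \<bullet> t) *\<^sub>R t + ((1/2) * ((g p + g q) \<bullet> n)) *\<^sub>R n)"

lemma edge_midpoint_dgrad_commute: "edge_midpoint_dgrad g p q = edge_midpoint_dgrad g q p"
proof -
  have "(1 / norm (q - p)) *\<^sub>R (q - p) = - ((1 / norm (p - q)) *\<^sub>R (p - q))"
    by (simp add: norm_minus_commute algebra_simps)
  then show ?thesis unfolding edge_midpoint_dgrad_def Let_def
    by (simp add: rot90_uminus add.commute)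
qed

lemma edge_midpoint_dgrad_iff:
  fixes Q g :: "real^2 \<Rightarrow> real^2"
  assumes "p \<noteq> q"
  shows "(let m = (1/2) *\<^sub>R (p + q); t = (1 / norm (q - p)) *\<^sub>R (q - p); n = rot90 t in
            Q m \<bullet> t = g m \<bullet> t \<and> Q m \<bullet> n = (1/2) * ((g p + g q) \<bullet> n))
         \<longleftrightarrow> Q ((1/2) *\<^sub>R (p + q)) = edge_midpoint_dgrad g p q"
proof -
  define t where "t = (1 / norm (q - p)) *\<^sub>R (q - p)"
  define m where "m = (1/2) *\<^sub>R (p + q)"
  have t: "norm t = 1" unfolding t_def using assms by simp
  then have "t \<bullet> t = 1" by (simp add: power2_norm_eq_inner[symmetric])
  have "(Q m \<bullet> t = g m \<bullet> t \<and> Q m \<bullet> rot90 t = (1/2) * ((g p + g q) \<bullet> rot90 t))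
        \<longleftrightarrow> Q m = (g m \<bullet> t) *\<^sub>R t + ((1/2) * ((g p + g q) \<bullet> rot90 t)) *\<^sub>R rot90 t"
  proof
    assume "Q m \<bullet> t = g m \<bullet> t \<and> Q m \<bullet> rot90 t = (1/2) * ((g p + g q) \<bullet> rot90 t)"
    then show "Q m = (g m \<bullet> t) *\<^sub>R t + ((1/2) * ((g p + g q) \<bullet> rot90 t)) *\<^sub>R rot90 t"
      using unit_rot90_expansion[OF t, of "Q m"] by (simp only:)
  next
    assume "Q m = (g m \<bullet> t) *\<^sub>R t + ((1/2) * ((g p + g q) \<bullet> rot90 t)) *\<^sub>R rot90 t"
    then show "Q m \<bullet> t = g m \<bullet> t \<and> Q m \<bullet> rot90 t = (1/2) * ((g p + g q) \<bullet> rot90 t)"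
      using \<open>t \<bullet> t = 1\<close> by (simp add: inner_add_left rot90_inner)
  qed
  then show ?thesis unfolding edge_midpoint_dgrad_def Let_def t_def[symmetric] m_def[symmetric] .
qed

lemma ldgrad_poly2:
  assumes V: "verts T = {a, b, c}" and nc: "\<not> collinear {a, b, c}"
  shows "poly2 2 (\<lambda>x. ldgrad T w x $ i)"
proof -
  define g where "g = grad (lpoly 3 T w)"
  have dist: "a \<noteq> b" "a \<noteq> c" "b \<noteq> c"
    using nc by (auto simp: collinear_2 insert_commute)
  have edges: "(\<forall>p\<in>{a, b, c}. \<forall>r\<in>{a, b, c}. p \<noteq> r \<longrightarrow>
         (let m = (1/2) *\<^sub>R (p + r); t = (1 / norm (r - p)) *\<^sub>R (r - p); n = rot90 t in
            q m \<bullet> t = g m \<bullet> t \<and> q m \<bullet> n = (1/2) * ((g p + g r) \<bullet> n)))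
     \<longleftrightarrow> q ((1/2) *\<^sub>R (a + b)) = edge_midpoint_dgrad g a b \<and>
         q ((1/2) *\<^sub>R (a + c)) = edge_midpoint_dgrad g a c \<and>
         q ((1/2) *\<^sub>R (b + c)) = edge_midpoint_dgrad g b c" for q
  proof -
    have "(\<forall>p\<in>{a, b, c}. \<forall>r\<in>{a, b, c}. p \<noteq> r \<longrightarrow>
         (let m = (1/2) *\<^sub>R (p + r); t = (1 / norm (r - p)) *\<^sub>R (r - p); n = rot90 t in
            q m \<bullet> t = g m \<bullet> t \<and> q m \<bullet> n = (1/2) * ((g p + g r) \<bullet> n)))
       \<longleftrightarrow> (\<forall>p\<in>{a, b, c}. \<forall>r\<in>{a, b, c}. p \<noteq> r \<longrightarrow>
           q ((1/2) *\<^sub>R (p + r)) = edge_midpoint_dgrad g p r)"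
      using edge_midpoint_dgrad_iff[where Q = q and g = g] by blast
    also have "\<dots> \<longleftrightarrow> q ((1/2) *\<^sub>R (a + b)) = edge_midpoint_dgrad g a b \<and>
         q ((1/2) *\<^sub>R (a + c)) = edge_midpoint_dgrad g a c \<and>
         q ((1/2) *\<^sub>R (b + c)) = edge_midpoint_dgrad g b c"
      using dist
      by (simp add: edge_midpoint_dgrad_commute[of g b a] edge_midpoint_dgrad_commute[of g c a]
          edge_midpoint_dgrad_commute[of g c b] add.commute[of b a] add.commute[of c a] add.commute[of c b]
          eq_commute[of b a] eq_commute[of c a] eq_commute[of c b]) blast
    finally show ?thesis .
  qed
  have "ldgrad T w = (THE q. (\<forall>i. poly2 2 (\<lambda>x. q x $ i)) \<and> q a = g a \<and> q b = g b \<and> q c = g c \<and>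
      q ((1/2) *\<^sub>R (a + b)) = edge_midpoint_dgrad g a b \<and>
      q ((1/2) *\<^sub>R (a + c)) = edge_midpoint_dgrad g a c \<and>
      q ((1/2) *\<^sub>R (b + c)) = edge_midpoint_dgrad g b c)"
    unfolding ldgrad_def V g_def[symmetric] edges by simp
  then show ?thesis using theI'[OF poly2_2_vector_interpolation[OF nc]] by (simp only:) blast
qed

definition dhess :: "(real^2) set \<Rightarrow> (real^2 \<Rightarrow> real^3) \<Rightarrow> real^2 \<Rightarrow> real^2^2^3" where
  "dhess T y x = (\<chi> k. dgrad_deriv T y k x)"

lemma hess_sq_eq_norm_dhess: "hess_sq T y x = (norm (dhess T y x))^2"
  unfolding hess_sq_def power2_norm_eq_inner inner_vec_def dhess_def vec_lambda_beta inner_real_def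
  by (simp add: power2_eq_square)

lemma dhess_component_poly2:
  assumes "verts T = {a, b, c}" "\<not> collinear {a, b, c}"
  shows "poly2 1 (\<lambda>x. dhess T y x $ k $ i $ j)"
  unfolding dhess_def dgrad_deriv_def vec_lambda_beta by (rule poly2_2_grad[OF ldgrad_poly2[OF assms]])

lemma dhess_affine_map:
  assumes "verts T = {a, b, c}" "\<not> collinear {a, b, c}"
  shows "affine_map (dhess T y)"
  using poly2_1_affine_map[OF dhess_component_poly2[OF assms]] unfolding affine_map_def
  by (simp add: vec_eq_iff)

lemma dhess_continuous_on:
  assumes "verts T = {a, b, c}" "\<not> collinear {a, b, c}"
  shows "continuous_on S (dhess T y)"
proof -
  have "continuous_on S (\<lambda>x. \<chi> k i j. dhess T y x $ k $ i $ j)"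
    by (intro continuous_on_vec_lambda poly2_continuous_on[OF dhess_component_poly2[OF assms]])
  then show ?thesis by simp
qed

lemma norm_dlap_sq_le: "(norm (dlap T y x))^2 \<le> 2 * (norm (dhess T y x))^2"
proof -
  let ?G = "\<lambda>k i j. dgrad_deriv T y k x $ i $ j"
  have "(norm (dlap T y x))^2 = (\<Sum>k\<in>UNIV. (?G k 1 1 + ?G k 2 2)^2)"
    unfolding power2_norm_eq_inner inner_vec_def dlap_def vec_lambda_beta inner_real_def
    by (simp add: sum_2 power2_eq_square)
  also have "\<dots> \<le> (\<Sum>k\<in>UNIV. 2 * (\<Sum>i\<in>UNIV. \<Sum>j\<in>UNIV. (?G k i j)^2))"
  proof (rule sum_mono)
    fix k
    have "(?G k 1 1 + ?G k 2 2)^2 \<le> 2 * ((?G k 1 1)^2 + (?G k 2 2)^2)"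
      using sum_squares_bound[of "?G k 1 1" "?G k 2 2"] by (simp add: power2_eq_square algebra_simps)
    also have "\<dots> \<le> 2 * (\<Sum>i\<in>UNIV. \<Sum>j\<in>UNIV. (?G k i j)^2)"
      by (simp add: sum_2)
    finally show "(?G k 1 1 + ?G k 2 2)^2 \<le> 2 * (\<Sum>i\<in>UNIV. \<Sum>j\<in>UNIV. (?G k i j)^2)" .
  qed
  also have "\<dots> = 2 * (norm (dhess T y x))^2"
    unfolding hess_sq_eq_norm_dhess[symmetric] hess_sq_def by (simp add: sum_distrib_left)
  finally show ?thesis .
qed

section \<open>Estimates on a single triangle\<close>

lemma integrable_on_compact_continuous:
  fixes f :: "'a::euclidean_space \<Rightarrow> real"
  assumes "compact S" "continuous_on S f"
  shows "f integrable_on S"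
proof -
  have "(\<lambda>x. indicator S x *\<^sub>R f x) integrable_on UNIV"
    by (rule integrable_on_lborel[OF borel_integrable_compact[OF assms]])
  then show ?thesis
    by (simp add: integrable_restrict_UNIV indicator_times_eq_if)
qed

lemma integral_const_lmeasurable:
  assumes "S \<in> lmeasurable"
  shows "integral S (\<lambda>x. c) = c * measure lebesgue S"
  using integral_cmul[of S c "\<lambda>x. 1::real"] lmeasure_integral[OF assms] by simp

lemma abs_integral_le_measure:
  assumes "S \<in> lmeasurable" "f integrable_on S" "\<And>x. x \<in> S \<Longrightarrow> \<bar>f x\<bar> \<le> B"
  shows "\<bar>integral S f\<bar> \<le> B * measure lebesgue S"
  using integral_norm_bound_integral[OF assms(2) integrable_on_const[OF assms(1)], of B] assms(3)
    integral_const_lmeasurable[OF assms(1)] by simp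

lemma integral_sq_norm_affine_map_lower_bound:
  fixes G :: "real^2 \<Rightarrow> 'a::real_normed_vector"
  assumes G: "affine_map G" "continuous_on T G"
    and T: "compact T" "convex T" and z: "z \<in> T"
    and z_max: "\<And>x. x \<in> T \<Longrightarrow> norm (G x) \<le> norm (G z)"
  shows "(norm (G z))^2 * measure lebesgue T \<le> 64 * integral T (\<lambda>x. (norm (G x))^2)"
proof -
  define M where "M = norm (G z)"
  \<comment> \<open>On the copy of T shrunk by the factor 1/4 towards z, the norm of G stays above M/2.\<close>
  define T' where "T' = (\<lambda>w. (1/4) *\<^sub>R w + (3/4) *\<^sub>R z) ` T"
  have "T' \<subseteq> T"
    unfolding T'_def using convexD[OF T(2) _ z] by auto
  have "compact T'"
    unfolding T'_def by (rule compact_continuous_image[OF _ T(1)]) (intro continuous_intros)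
  have measure_T': "measure lebesgue T' = (1/16) * measure lebesgue T"
    unfolding T'_def using measure_lebesgue_affine[of "1/4" "(3/4) *\<^sub>R z" T] by (simp add: power2_eq_square)
  have large_on_T': "(M/2)^2 \<le> (norm (G x))^2" if x: "x \<in> T'" for x
  proof -
    obtain w where w: "w \<in> T" "x = (1/4) *\<^sub>R w + (3/4) *\<^sub>R z" using x unfolding T'_def by blast
    have "G ((1 - 3/4) *\<^sub>R w + (3/4) *\<^sub>R z) = (1 - 3/4) *\<^sub>R G w + (3/4) *\<^sub>R G z"
      using G(1) unfolding affine_map_def by blast
    then have "G x = (1/4) *\<^sub>R G w + (3/4) *\<^sub>R G z" using w(2) by simp
    then have "(3/4) * M - (1/4) * norm (G w) \<le> norm (G x)"
      using norm_diff_ineq[of "(3/4) *\<^sub>R G z" "(1/4) *\<^sub>R G w"] by (simp add: M_def add.commute)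
    then have "M/2 \<le> norm (G x)" using z_max[OF w(1)] unfolding M_def by linarith
    moreover have "0 \<le> M/2" by (simp add: M_def)
    ultimately show ?thesis by (rule power_mono)
  qed
  have integrable: "(\<lambda>x. (norm (G x))^2) integrable_on S" if "compact S" "S \<subseteq> T" for S
    using continuous_on_subset[OF G(2) that(2)]
    by (intro integrable_on_compact_continuous that(1) continuous_intros)
  have "(M/2)^2 * ((1/16) * measure lebesgue T) = integral T' (\<lambda>x. (M/2)^2)"
    using integral_const_lmeasurable[OF lmeasurable_compact[OF \<open>compact T'\<close>]] measure_T' by simp
  also have "\<dots> \<le> integral T' (\<lambda>x. (norm (G x))^2)"
    using integrable_on_const[OF lmeasurable_compact[OF \<open>compact T'\<close>]]
      integrable[OF \<open>compact T'\<close> \<open>T' \<subseteq> T\<close>] large_on_T' by (rule integral_le)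
  also have "\<dots> \<le> integral T (\<lambda>x. (norm (G x))^2)"
    using integrable[OF \<open>compact T'\<close> \<open>T' \<subseteq> T\<close>] integrable[OF T(1) order_refl] \<open>T' \<subseteq> T\<close>
    by (intro integral_subset_le) auto
  finally show ?thesis unfolding M_def by (simp add: power_divide)
qed

lemma abs_integral_linterp1_le:
  assumes V: "verts T = {a, b, c}" and T: "T = convex hull {a, b, c}" and nc: "\<not> collinear {a, b, c}"
  shows "\<bar>integral T (linterp1 T f)\<bar> \<le> max \<bar>f a\<bar> (max \<bar>f b\<bar> \<bar>f c\<bar>) * measure lebesgue T"
proof (rule abs_integral_le_measure)
  have l: "poly2 1 (linterp1 T f)" and vertex_values:
    "linterp1 T f a = f a" "linterp1 T f b = f b" "linterp1 T f c = f c"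
    using linterp1_triangle[OF V nc] by auto
  have "compact T" unfolding T by (simp add: compact_convex_hull)
  then show "T \<in> lmeasurable" "linterp1 T f integrable_on T"
    by (simp_all add: lmeasurable_compact integrable_on_compact_continuous poly2_continuous_on[OF l])
  show "\<bar>linterp1 T f x\<bar> \<le> max \<bar>f a\<bar> (max \<bar>f b\<bar> \<bar>f c\<bar>)" if "x \<in> T" for x
    using affine_map_norm_le_vertex_max[OF poly2_1_affine_map[OF l], of x a b c] that vertex_values
    unfolding T by simp
qed

lemma interp_term_element_estimate:
  assumes V: "verts T = {a, b, c}" and T: "T = convex hull {a, b, c}" and nc: "\<not> collinear {a, b, c}"
    and cross: "\<And>z. z \<in> {a, b, c} \<Longrightarrow> norm (cross3 (column 1 (ljac T y z)) (column 2 (ljac T y z))) \<le> 1"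
  shows "(integral T (linterp1 T (\<lambda>x. dlap T y x \<bullet> cross3 (column 1 (ljac T y x)) (column 2 (ljac T y x)))))^2
    \<le> 128 * measure lebesgue T * integral T (hess_sq T y)"
proof -
  define F where "F x = dlap T y x \<bullet> cross3 (column 1 (ljac T y x)) (column 2 (ljac T y x))" for x
  define G where "G = dhess T y"
  define M where "M = max (norm (G a)) (max (norm (G b)) (norm (G c)))"
  define \<mu> where "\<mu> = measure lebesgue T"
  have "0 \<le> \<mu>" unfolding \<mu>_def by simp
  have F_vertex: "\<bar>F z\<bar> \<le> sqrt 2 * M" if "z \<in> {a, b, c}" for z
  proof -
    have "\<bar>F z\<bar> \<le> norm (dlap T y z) * norm (cross3 (column 1 (ljac T y z)) (column 2 (ljac T y z)))"
      unfolding F_def by (rule Cauchy_Schwarz_ineq2)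
    also have "\<dots> \<le> norm (dlap T y z)" using cross[OF that] by (simp add: mult_left_le)
    also have "\<dots> \<le> sqrt 2 * norm (G z)"
      using real_le_rsqrt[OF norm_dlap_sq_le] by (simp add: real_sqrt_mult G_def)
    also have "\<dots> \<le> sqrt 2 * M" using that by (auto simp: M_def)
    finally show ?thesis .
  qed
  have upper: "\<bar>integral T (linterp1 T F)\<bar> \<le> sqrt 2 * M * \<mu>"
  proof -
    have "\<bar>integral T (linterp1 T F)\<bar> \<le> max \<bar>F a\<bar> (max \<bar>F b\<bar> \<bar>F c\<bar>) * \<mu>"
      unfolding \<mu>_def by (rule abs_integral_linterp1_le[OF V T nc])
    also have "\<dots> \<le> sqrt 2 * M * \<mu>" using F_vertex \<open>0 \<le> \<mu>\<close> by (intro mult_right_mono) auto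
    finally show ?thesis .
  qed
  obtain z where z: "z \<in> {a, b, c}" "norm (G z) = M" unfolding M_def by (metis insertI1 insertI2 max_def)
  have lower: "M^2 * \<mu> \<le> 64 * integral T (hess_sq T y)"
  proof -
    have "compact T" "convex T" "z \<in> T" using z(1) unfolding T by (auto simp: compact_convex_hull hull_inc)
    moreover have "norm (G x) \<le> norm (G z)" if "x \<in> T" for x
      using affine_map_norm_le_vertex_max[OF dhess_affine_map[OF V nc], of x] that z(2)
      unfolding T G_def M_def by simp
    ultimately show ?thesis
      using integral_sq_norm_affine_map_lower_bound[OF dhess_affine_map[OF V nc] dhess_continuous_on[OF V nc]]
      unfolding hess_sq_eq_norm_dhess z(2)[symmetric] \<mu>_def G_def by blast
  qed
  have "(integral T (linterp1 T F))^2 \<le> (sqrt 2 * M * \<mu>)^2"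
    using upper by (simp add: abs_le_square_iff[symmetric] M_def \<open>0 \<le> \<mu>\<close>)
  also have "\<dots> = 2 * \<mu> * (M^2 * \<mu>)" by (simp add: power_mult_distrib power2_eq_square)
  also have "\<dots> \<le> 2 * \<mu> * (64 * integral T (hess_sq T y))" using lower \<open>0 \<le> \<mu>\<close> by (intro mult_left_mono) auto
  finally show ?thesis unfolding F_def \<mu>_def by simp
qed

section \<open>Summation over the triangulation\<close>

lemma integral_hess_sq_nonneg: "0 \<le> integral T (hess_sq T y)"
  by (cases "hess_sq T y integrable_on T")
     (simp_all add: integral_nonneg hess_sq_eq_norm_dhess not_integrable_integral)

lemma norm_cross_orthonormal_columns:
  fixes J :: "real^2^3"
  assumes "transpose J ** J = mat 1"
  shows "norm (cross3 (column 1 J) (column 2 J)) = 1"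
proof -
  have "column i J \<bullet> column j J = (transpose J ** J) $ i $ j" for i j
    by (simp add: matrix_matrix_mult_def transpose_def column_def inner_vec_def)
  then have "column 1 J \<bullet> column 1 J = 1" "column 2 J \<bullet> column 2 J = 1" "column 1 J \<bullet> column 2 J = 0"
    unfolding assms by (simp_all add: mat_def)
  then have "(norm (cross3 (column 1 J) (column 2 J)))^2 = 1"
    using norm_cross[of "column 1 J" "column 2 J"] power2_norm_eq_inner[of "column 1 J"]
      power2_norm_eq_inner[of "column 2 J"] by simp
  then show ?thesis by (simp add: power2_eq_1_iff) (metis norm_ge_zero neg_0_le_iff_le not_one_le_zero)
qed

lemma vjac_eq_ljac:
  assumes dkt: "\<And>k. S_dkt Tr (\<lambda>x. y x $ k)" and T: "T \<in> Tr" and z: "z \<in> nodes Tr" "z \<in> T"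
  shows "vjac Tr y z = ljac T y z"
proof -
  define T0 where "T0 = (SOME T. T \<in> Tr \<and> z \<in> T)"
  have T0: "T0 \<in> Tr \<and> z \<in> T0" unfolding T0_def by (rule someI[of _ T]) (use T z in blast)
  have "grad (lpoly 3 T0 (\<lambda>x. y x $ k)) z = grad (lpoly 3 T (\<lambda>x. y x $ k)) z" for k
    using dkt[of k] T0 T z unfolding S_dkt_def by blast
  then show ?thesis unfolding vjac_def T0_def[symmetric] ljac_def by (simp add: vec_eq_iff)
qed

lemma regular_triangulationD:
  assumes "regular_triangulation \<omega> Tr"
  shows "finite Tr" "\<And>T. T \<in> Tr \<Longrightarrow> triangle T" "\<Union>Tr = closure \<omega>"
    "\<And>T T'. T \<in> Tr \<Longrightarrow> T' \<in> Tr \<Longrightarrow> T \<noteq> T' \<Longrightarrow>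
        T \<inter> T' = {} \<or> (\<exists>z. z \<in> verts T \<and> z \<in> verts T' \<and> T \<inter> T' = {z}) \<or>
        (\<exists>E. E \<in> edges T \<and> E \<in> edges T' \<and> T \<inter> T' = E)"
  using assms unfolding regular_triangulation_def by simp_all

lemma interp_term_triangulation_estimate:
  assumes reg: "regular_triangulation \<omega> Tr" and y: "y \<in> adm Tr \<Gamma>D yD \<phi>D" and T: "T \<in> Tr"
  shows "(integral T (linterp1 T (\<lambda>x. dlap T y x \<bullet> cross3 (column 1 (ljac T y x)) (column 2 (ljac T y x)))))^2
    \<le> 128 * measure lebesgue T * integral T (hess_sq T y)"
proof -
  obtain a b c where V: "verts T = {a, b, c}" and T_hull: "T = convex hull {a, b, c}"
    and nc: "\<not> collinear {a, b, c}"
    using regular_triangulationD(2)[OF reg T] by (rule triangle_vertices)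
  show ?thesis
  proof (rule interp_term_element_estimate[OF V T_hull nc])
    fix z assume "z \<in> {a, b, c}"
    then have "z \<in> nodes Tr" "z \<in> T" unfolding nodes_def T_hull using T V by (auto intro: hull_inc)
    then have "vjac Tr y z = ljac T y z" using y T unfolding adm_def by (auto intro: vjac_eq_ljac)
    moreover have "transpose (vjac Tr y z) ** vjac Tr y z = mat 1"
      using y \<open>z \<in> nodes Tr\<close> unfolding adm_def by blast
    ultimately show "norm (cross3 (column 1 (ljac T y z)) (column 2 (ljac T y z))) \<le> 1"
      using norm_cross_orthonormal_columns by simp
  qed
qed

lemma measure_closure_eq_sum_triangles:
  assumes reg: "regular_triangulation \<omega> Tr"
  shows "measure lebesgue (closure \<omega>) = (\<Sum>T\<in>Tr. measure lebesgue T)"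
proof -
  have "T \<in> lmeasurable" if T: "T \<in> Tr" for T
  proof -
    obtain a b c where "T = convex hull {a, b, c}"
      using regular_triangulationD(2)[OF reg T] by (rule triangle_vertices)
    then show ?thesis by (simp add: lmeasurable_compact compact_convex_hull)
  qed
  moreover have "pairwise (\<lambda>S T. negligible (S \<inter> T)) Tr"
  proof (rule pairwiseI)
    fix T T' assume "T \<in> Tr" "T' \<in> Tr" "T \<noteq> T'"
    then have "T \<inter> T' = {} \<or> (\<exists>z. T \<inter> T' = {z}) \<or> (\<exists>E. E \<in> edges T \<and> T \<inter> T' = E)"
      using regular_triangulationD(4)[OF reg] by blast
    moreover have "negligible E" if "E \<in> edges T" for E
      using that unfolding edges_def
      by (auto simp: negligible_convex_interior interior_closed_segment_ge2)
    ultimately show "negligible (T \<inter> T')" by auto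
  qed
  ultimately show ?thesis
    using measure_negligible_finite_Union[OF regular_triangulationD(1)[OF reg]] regular_triangulationD(3)[OF reg]
    by simp
qed

lemma abs_sum_le_sqrt_mult_sums:
  fixes L m S :: "'a \<Rightarrow> real"
  assumes bound: "\<And>T. T \<in> A \<Longrightarrow> (L T)^2 \<le> C * m T * S T"
    and nonneg: "0 \<le> C" "\<And>T. T \<in> A \<Longrightarrow> 0 \<le> m T" "\<And>T. T \<in> A \<Longrightarrow> 0 \<le> S T"
  shows "\<bar>\<Sum>T\<in>A. L T\<bar> \<le> sqrt C * sqrt (\<Sum>T\<in>A. m T) * sqrt (\<Sum>T\<in>A. S T)"
proof -
  have "\<bar>\<Sum>T\<in>A. L T\<bar> \<le> (\<Sum>T\<in>A. \<bar>L T\<bar>)" by (rule sum_abs)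
  also have "\<dots> \<le> (\<Sum>T\<in>A. sqrt C * (sqrt (m T) * sqrt (S T)))"
  proof (rule sum_mono)
    fix T assume "T \<in> A"
    then have "\<bar>L T\<bar>^2 \<le> C * m T * S T" using bound by simp
    from real_le_rsqrt[OF this] show "\<bar>L T\<bar> \<le> sqrt C * (sqrt (m T) * sqrt (S T))"
      by (simp add: real_sqrt_mult mult.assoc)
  qed
  also have "\<dots> = sqrt C * (\<Sum>T\<in>A. \<bar>sqrt (m T)\<bar> * \<bar>sqrt (S T)\<bar>)"
    unfolding sum_distrib_left by (rule sum.cong) (use nonneg in auto)
  also have "\<dots> \<le> sqrt C * (L2_set (\<lambda>T. sqrt (m T)) A * L2_set (\<lambda>T. sqrt (S T)) A)"
    by (rule mult_left_mono[OF L2_set_mult_ineq]) (simp add: nonneg)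
  also have "L2_set (\<lambda>T. sqrt (m T)) A = sqrt (\<Sum>T\<in>A. m T)"
    unfolding L2_set_def using nonneg by (simp cong: sum.cong)
  also have "L2_set (\<lambda>T. sqrt (S T)) A = sqrt (\<Sum>T\<in>A. S T)"
    unfolding L2_set_def using nonneg by (simp cong: sum.cong)
  finally show ?thesis by (simp add: mult.assoc)
qed

lemma le_of_square_le_affine:
  fixes x a b :: real
  assumes "x^2 \<le> a * x + b" "0 \<le> a" "0 \<le> b"
  shows "x \<le> a + b + 1"
proof (cases "x \<le> 1")
  case False
  then have "x * x \<le> (a + b) * x"
    using assms mult_left_mono[of 1 x b] by (simp add: power2_eq_square distrib_right)
  then have "x \<le> a + b" using False by simp
  then show ?thesis by linarith
qed (use assms in linarith)

lemma dhess_norm_le_of_energy_le: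
  assumes reg: "regular_triangulation \<omega> Tr" and E: "\<bar>energy Tr \<Gamma>D yD \<phi>D \<alpha> y\<bar> \<le> ereal K"
  shows "dhess_norm Tr y \<le> 2 * (\<bar>\<alpha>\<bar> * sqrt 128 * sqrt (measure lebesgue (closure \<omega>))) + 2 * \<bar>K\<bar> + 1"
proof -
  define A where "A = \<bar>\<alpha>\<bar> * sqrt 128 * sqrt (measure lebesgue (closure \<omega>))"
  define S where "S = (\<Sum>T\<in>Tr. integral T (hess_sq T y))"
  define I where "I = (\<Sum>T\<in>Tr. integral T (linterp1 T
    (\<lambda>x. dlap T y x \<bullet> cross3 (column 1 (ljac T y x)) (column 2 (ljac T y x)))))"
  have y: "y \<in> adm Tr \<Gamma>D yD \<phi>D"
    using E by (auto simp: energy_def split: if_splits)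
  then have "\<bar>(1/2) * S - \<alpha> * I\<bar> \<le> K"
    using E unfolding energy_def S_def I_def by simp
  moreover have "\<bar>I\<bar> \<le> sqrt 128 * sqrt (measure lebesgue (closure \<omega>)) * sqrt S"
    unfolding I_def S_def measure_closure_eq_sum_triangles[OF reg]
    by (rule abs_sum_le_sqrt_mult_sums)
       (simp_all add: interp_term_triangulation_estimate[OF reg y] integral_hess_sq_nonneg)
  then have "\<bar>\<alpha> * I\<bar> \<le> A * sqrt S"
    unfolding A_def abs_mult by (simp add: mult_left_mono mult.assoc)
  moreover have "0 \<le> S" unfolding S_def by (simp add: sum_nonneg integral_hess_sq_nonneg)
  ultimately have "(sqrt S)^2 \<le> (2 * A) * sqrt S + 2 * \<bar>K\<bar>" by simp
  then have "sqrt S \<le> 2 * A + 2 * \<bar>K\<bar> + 1"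
    by (rule le_of_square_le_affine) (simp_all add: A_def)
  then show ?thesis unfolding dhess_norm_def S_def A_def .
qed

theorem proposition4p1:
  fixes \<omega> \<Gamma>D :: "(real^2) set"
    and yD :: "real^2 \<Rightarrow> real^3" and \<phi>D :: "real^2 \<Rightarrow> real^2^3" and \<alpha> :: real
    and yDt :: "real^2 \<Rightarrow> real^3" and DyDt :: "real^2 \<Rightarrow> real^2^3"
    and H :: "real set" and Tr :: "real \<Rightarrow> (real^2) set set"
    and y :: "real \<Rightarrow> real^2 \<Rightarrow> real^3"
  assumes dom: "polygonal_domain \<omega>"
    and GD: "\<Gamma>D \<subseteq> frontier \<omega>" "positive_length \<Gamma>D"
    and Hpos: "H \<subseteq> {0<..}" and Hlim: "0 islimpt H"
    and tri: "\<And>h. h \<in> H \<Longrightarrow> regular_triangulation \<omega> (Tr h) \<and> mesh (Tr h) = h \<and>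
                 \<Gamma>D = \<Union>{E \<in> edges_of (Tr h). E \<subseteq> \<Gamma>D}"
    and ext_H3: "H3 \<omega> yDt"
    and ext_C1: "continuous_on (closure \<omega>) DyDt"
        "\<And>x. x \<in> closure \<omega> \<Longrightarrow> (yDt has_derivative (\<lambda>v. DyDt x *v v)) (at x within closure \<omega>)"
    and bdry: "\<And>x. x \<in> \<Gamma>D \<Longrightarrow> yD x = yDt x \<and> \<phi>D x = DyDt x"
    and bounded_energy: "\<exists>K. \<forall>h\<in>H. \<bar>energy (Tr h) \<Gamma>D yD \<phi>D \<alpha> (y h)\<bar> \<le> ereal K"
  shows "\<exists>C>0. \<forall>h\<in>H. dhess_norm (Tr h) (y h) \<le> C"
proof -
  obtain K where K: "\<And>h. h \<in> H \<Longrightarrow> \<bar>energy (Tr h) \<Gamma>D yD \<phi>D \<alpha> (y h)\<bar> \<le> ereal K"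
    using bounded_energy by blast
  define C where "C = 2 * (\<bar>\<alpha>\<bar> * sqrt 128 * sqrt (measure lebesgue (closure \<omega>))) + 2 * \<bar>K\<bar> + 1"
  have "0 \<le> \<bar>\<alpha>\<bar> * sqrt 128 * sqrt (measure lebesgue (closure \<omega>))" by simp
  then have "0 < C" unfolding C_def by linarith
  moreover have "dhess_norm (Tr h) (y h) \<le> C" if "h \<in> H" for h
    unfolding C_def using tri[OF that] K[OF that] by (blast intro: dhess_norm_le_of_energy_le)
  ultimately show ?thesis by blast
qed

end
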